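(* Fix $k\in\mathbb{N}$, $q\in(0,1)$, $s=q^{-1/2}$ and $u>s$. Let $\lambda\in\mathsf{Sign}_k^+$ with $\lambda_1>\lambda_2>\dots>\lambda_k$. If $\pi\in\mathcal{P}_{\lambda/\varnothing}$ is typical, then $$\mathcal{W}(\pi)=\left(\frac{1-q}{1-su}\right)^{\binom{k+1}{2}}\left(\frac{(1-q^{-1})u}{1-su}\right)^{\binom{k}{2}}\left(\frac{u-s}{1-su}\right)^{|\lambda|-\binom{k}{2}},$$ where $|\lambda|=\lambda_1+\dots+\lambda_k$.
   Context: $\mathsf{Sign}_k^+$ is the set of $\lambda=(\lambda_1\ge\dots\ge\lambda_k)$ with $\lambda_i\in\mathbb{Z}_{\ge0}$. A vertex has type $(i_1,j_1;i_2,j_2)$ if $i_1$ (resp. $j_1$) paths enter from below (resp. the left) and $i_2$ (resp. $j_2$) leave upward (resp. right). Weights with spectral parameter $z$ ($g\in\mathbb{Z}_{\ge0}$; all other types weight $0$): $w_z(g,0;g,0)=\frac{1-sq^gz}{1-sz}$, $w_z(g+1,0;g,1)=\frac{(1-s^2q^g)z}{1-sz}$, $w_z(g,1;g,1)=\frac{z-sq^g}{1-sz}$, $w_z(g,1;g+1,0)=\frac{1-q^{g+1}}{1-sz}$. For $\lambda\in\mathsf{Sign}_k^+$, $\mathcal{P}_{\lambda/\varnothing}$ is the set of collections of up-right paths in $\mathbb{Z}_{\ge0}\times\{1,\dots,k\}$ with at most one path per horizontal edge (vertical edges may carry several), one path entering through $(-1,y)\to(0,y)$ for each $y=1,\dots,k$,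 none entering from the bottom, and paths exiting at the top through $(\lambda_i,k)\to(\lambda_i,k+1)$, $i=1,\dots,k$. For such $\pi$, $\mathcal{W}(\pi)=\prod_{(x,y)}w_u(\text{type of }(x,y))$. A path collection $\pi\in\mathcal{P}_{\lambda/\varnothing}$ (with $\lambda$ strictly decreasing) is typical if every vertex of $\pi$ has one of the types $(0,0;0,0)$, $(0,1;0,1)$, $(0,1;1,0)$, $(1,0;0,1)$. *)

theory Defs
  imports Complex_Main
begin

definition Sign_plus :: "nat \<Rightarrow> nat list set" where
  "Sign_plus k = {lam. length lam = k \<and> sorted_wrt (\<ge>) lam}"

text \<open>Vertex weight w_z(i1,j1;i2,j2): i1 paths from below, j1 from the left,
  i2 leave upward, j2 leave to the right.\<close>
definition vweight :: "real \<Rightarrow> real \<Rightarrow> real \<Rightarrow> nat \<Rightarrow> nat \<Rightarrow> nat \<Rightarrow> nat \<Rightarrow> real" where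
  "vweight q s z i1 j1 i2 j2 =
     (if j1 = 0 \<and> j2 = 0 \<and> i1 = i2 then (1 - s * q ^ i1 * z) / (1 - s * z)
      else if j1 = 0 \<and> j2 = 1 \<and> i1 = Suc i2 then (1 - s ^ 2 * q ^ i2) * z / (1 - s * z)
      else if j1 = 1 \<and> j2 = 1 \<and> i1 = i2 then (z - s * q ^ i1) / (1 - s * z)
      else if j1 = 1 \<and> j2 = 0 \<and> i2 = Suc i1 then (1 - q ^ (Suc i1)) / (1 - s * z)
      else 0)"

text \<open>A path collection is encoded by edge occupation numbers:
  h x y = number of paths on the horizontal edge (x-1,y) \<rightarrow> (x,y) (x = 0 is the
  incoming boundary edge (-1,y) \<rightarrow> (0,y));
  v x y = number of paths on the vertical edge (x,y-1) \<rightarrow> (x,y)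
  (y = 1 is the bottom boundary, y = k+1 the top boundary).
  The vertex (x,y) has type (v x y, h x y; v x (y+1), h (x+1) y).\<close>
type_synonym pathcoll = "(nat \<Rightarrow> nat \<Rightarrow> nat) \<times> (nat \<Rightarrow> nat \<Rightarrow> nat)"

definition vertices_nonempty :: "nat \<Rightarrow> pathcoll \<Rightarrow> (nat \<times> nat) set" where
  "vertices_nonempty k P = (case P of (h, v) \<Rightarrow>
     {(x, y). y \<in> {1..k} \<and> (v x y \<noteq> 0 \<or> h x y \<noteq> 0 \<or> v x (Suc y) \<noteq> 0 \<or> h (Suc x) y \<noteq> 0)})"

definition P_lam :: "nat \<Rightarrow> nat list \<Rightarrow> pathcoll set" where
  "P_lam k lam = {(h, v).
      (\<forall>x y. h x y \<le> 1) \<and>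
      (\<forall>y \<in> {1..k}. h 0 y = 1) \<and>
      (\<forall>x. v x 1 = 0) \<and>
      (\<forall>x. v x (Suc k) = card {i. i < k \<and> lam ! i = x}) \<and>
      (\<forall>x. \<forall>y \<in> {1..k}. v x y + h x y = v x (Suc y) + h (Suc x) y) \<and>
      finite {(x, y). y \<in> {1..k} \<and> (h x y \<noteq> 0 \<or> v x y \<noteq> 0)}}"

text \<open>Weight of a path collection: product of vertex weights over all vertices;
  empty vertices (type (0,0;0,0)) have weight (1 - s z)/(1 - s z), which is 1 whenever
  1 - s z \<noteq> 0, so only nonempty vertices are multiplied.\<close>
definition Wt :: "real \<Rightarrow> real \<Rightarrow> real \<Rightarrow> nat \<Rightarrow> pathcoll \<Rightarrow> real" where
  "Wt q s u k P = (case P of (h, v) \<Rightarrow>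
     (\<Prod>(x, y) \<in> vertices_nonempty k P. vweight q s u (v x y) (h x y) (v x (Suc y)) (h (Suc x) y)))"

definition typical :: "nat \<Rightarrow> pathcoll \<Rightarrow> bool" where
  "typical k P = (case P of (h, v) \<Rightarrow>
     (\<forall>x. \<forall>y \<in> {1..k}. (v x y, h x y, v x (Suc y), h (Suc x) y) \<in>
        {(0,0,0,0), (0,1,0,1), (0,1,1,0), (1,0,0,1)}))"

end

theory Submission
  imports Defs
begin

(* A typical collection has only three kinds of nonempty vertices: up-turns (0,1;1,0) of weight
   (1-q)/(1-su), right-turns (1,0;0,1) of weight (1-1/q)u/(1-su) (because s^2 = 1/q), and
   straights (0,1;0,1) of weight (u-s)/(1-su); empty vertices have weight 1. So W is a monomial
   whose exponents count edges. Conservation of paths in row y, where one path enters from the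
   left, shows that y-1 paths enter row y from below, which gives C(k+1,2) up-turns and C(k,2)
   right-turns. The first moment (sum of x v(x,y)) of the vertical flux grows from one row to the
   next by the number of horizontal steps in the row, and is |lambda| at the top; as every
   horizontal step leaves a straight or a right-turn, there are |lambda| - C(k,2) straights. *)

lemma sum_times_card_nth_eq_sum_list:
  assumes "\<forall>l\<in>set xs. l < N"
  shows "(\<Sum>x<N. x * card {i. i < length xs \<and> xs ! i = x}) = sum_list xs"
proof -
  have "(\<Sum>x<N. x * card {i. i < length xs \<and> xs ! i = x})
      = (\<Sum>x<N. \<Sum>i\<in>{i. i \<in> {..<length xs} \<and> xs ! i = x}. xs ! i)"
    by (intro sum.cong) auto
  also have "\<dots> = (\<Sum>i<length xs. xs ! i)"
    using assms by (intro sum.group) auto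
  finally show ?thesis by (simp add: sum_list_sum_nth atLeast0LessThan)
qed

lemma sum_flux_balance:
  fixes a b c :: "nat \<Rightarrow> nat"
  assumes "\<And>x. x < N \<Longrightarrow> a x + b x = c x + b (Suc x)"
  shows "(\<Sum>x<N. c x) + b N = (\<Sum>x<N. a x) + b 0"
  using assms
proof (induction N)
  case (Suc N)
  have "(\<Sum>x<N. c x) + b N = (\<Sum>x<N. a x) + b 0" using Suc by simp
  moreover have "a N + b N = c N + b (Suc N)" using Suc.prems by simp
  ultimately show ?case by simp
qed simp

lemma sum_moment_balance:
  fixes a b c :: "nat \<Rightarrow> nat"
  assumes "\<And>x. x < N \<Longrightarrow> a x + b x = c x + b (Suc x)"
  shows "(\<Sum>x<N. x * c x) + N * b N = (\<Sum>x<N. x * a x) + (\<Sum>x<N. b (Suc x))"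
  using assms
proof (induction N)
  case (Suc N)
  have "N * a N + N * b N = N * c N + N * b (Suc N)"
    using Suc.prems[of N] by (simp flip: distrib_left)
  then show ?case using Suc by simp
qed simp

lemma sum_atLeast1_atMost_eq_Suc_choose_2: "(\<Sum>y\<in>{1..k}. y) = Suc k choose 2"
  by (induction k) (auto simp: numeral_2_eq_2)

lemma sum_atLeast1_atMost_pred_eq_choose_2: "(\<Sum>y\<in>{1..k}. y - 1) = k choose 2"
  by (induction k) (auto simp: numeral_2_eq_2)

definition empty_from_column ::
    "nat \<Rightarrow> nat \<Rightarrow> (nat \<Rightarrow> nat \<Rightarrow> nat) \<Rightarrow> (nat \<Rightarrow> nat \<Rightarrow> nat) \<Rightarrow> bool" where
  "empty_from_column N k h v \<longleftrightarrow>
     (\<forall>x\<ge>N. (\<forall>y\<in>{1..k}. h x y = 0) \<and> (\<forall>y\<in>{1..Suc k}. v x y = 0))"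

lemma P_lam_empty_from_column:
  assumes "(h, v) \<in> P_lam k lam" "length lam = k"
  obtains N where "empty_from_column N k h v"
proof -
  define S where "S = {(x, y). y \<in> {1..k} \<and> (h x y \<noteq> 0 \<or> v x y \<noteq> 0)}"
  have "finite (fst ` S \<union> set lam)"
    using assms(1) unfolding S_def P_lam_def by auto
  then obtain N where N: "\<And>n. n \<in> fst ` S \<union> set lam \<Longrightarrow> n < N"
    unfolding finite_nat_set_iff_bounded by blast
  have "v x (Suc k) = 0" if "N \<le> x" for x
  proof -
    have "x \<notin> set lam" using N that by force
    then have "{i. i < k \<and> lam ! i = x} = {}" using assms(2) by auto
    then show ?thesis using assms(1) unfolding P_lam_def by simp
  qed
  moreover have "h x y = 0 \<and> v x y = 0" if "N \<le> x" "y \<in> {1..k}" for x y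
    using N[of x] that unfolding S_def by force
  ultimately have "empty_from_column N k h v"
    unfolding empty_from_column_def by (metis atLeastAtMost_iff le_Suc_eq)
  then show thesis by (rule that)
qed

lemma P_lam_vertical_flux:
  assumes "(h, v) \<in> P_lam k lam" "empty_from_column N k h v" "j \<le> k"
  shows "(\<Sum>x<N. v x (Suc j)) = j"
  using assms(3)
proof (induction j)
  case 0
  then show ?case using assms(1) unfolding P_lam_def by simp
next
  case (Suc j)
  have row: "Suc j \<in> {1..k}" using Suc.prems by simp
  have "(\<Sum>x<N. v x (Suc (Suc j))) + h N (Suc j) = (\<Sum>x<N. v x (Suc j)) + h 0 (Suc j)"
    using assms(1) row unfolding P_lam_def by (intro sum_flux_balance) auto
  moreover have "h N (Suc j) = 0" using assms(2) row unfolding empty_from_column_def by simp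
  moreover have "h 0 (Suc j) = 1" using assms(1) row unfolding P_lam_def by simp
  ultimately show ?case using Suc by simp
qed

lemma P_lam_vertical_moment:
  assumes "(h, v) \<in> P_lam k lam" "empty_from_column N k h v" "j \<le> k"
  shows "(\<Sum>x<N. x * v x (Suc j)) = (\<Sum>y\<in>{1..j}. \<Sum>x<N. h (Suc x) y)"
  using assms(3)
proof (induction j)
  case 0
  then show ?case using assms(1) unfolding P_lam_def by simp
next
  case (Suc j)
  have row: "Suc j \<in> {1..k}" using Suc.prems by simp
  have "(\<Sum>x<N. x * v x (Suc (Suc j))) + N * h N (Suc j)
      = (\<Sum>x<N. x * v x (Suc j)) + (\<Sum>x<N. h (Suc x) (Suc j))"
    using assms(1) row unfolding P_lam_def by (intro sum_moment_balance) auto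
  moreover have "h N (Suc j) = 0" using assms(2) row unfolding empty_from_column_def by simp
  ultimately show ?case using Suc by simp
qed

lemma P_lam_sum_vertical:
  assumes "(h, v) \<in> P_lam k lam" "empty_from_column N k h v"
  shows "(\<Sum>y\<in>{1..k}. \<Sum>x<N. v x (Suc y)) = Suc k choose 2"
    and "(\<Sum>y\<in>{1..k}. \<Sum>x<N. v x y) = k choose 2"
proof -
  have "(\<Sum>y\<in>{1..k}. \<Sum>x<N. v x (Suc y)) = (\<Sum>y\<in>{1..k}. y)"
    using P_lam_vertical_flux[OF assms] by (intro sum.cong) auto
  also have "\<dots> = Suc k choose 2" by (rule sum_atLeast1_atMost_eq_Suc_choose_2)
  finally show "(\<Sum>y\<in>{1..k}. \<Sum>x<N. v x (Suc y)) = Suc k choose 2" .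
  have "(\<Sum>x<N. v x y) = y - 1" if "y \<in> {1..k}" for y
    using P_lam_vertical_flux[OF assms, of "y - 1"] that by auto
  then have "(\<Sum>y\<in>{1..k}. \<Sum>x<N. v x y) = (\<Sum>y\<in>{1..k}. y - 1)"
    by (intro sum.cong) auto
  also have "\<dots> = k choose 2" by (rule sum_atLeast1_atMost_pred_eq_choose_2)
  finally show "(\<Sum>y\<in>{1..k}. \<Sum>x<N. v x y) = k choose 2" .
qed

lemma P_lam_sum_horizontal_steps:
  assumes "(h, v) \<in> P_lam k lam" "empty_from_column N k h v" "length lam = k"
  shows "(\<Sum>y\<in>{1..k}. \<Sum>x<N. h (Suc x) y) = sum_list lam"
proof -
  have top: "v x (Suc k) = card {i. i < length lam \<and> lam ! i = x}" for x
    using assms(1,3) unfolding P_lam_def by simp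
  have "l < N" if "l \<in> set lam" for l
  proof (rule ccontr)
    assume "\<not> l < N"
    moreover obtain i where "i < length lam" "lam ! i = l"
      using \<open>l \<in> set lam\<close> by (auto simp: in_set_conv_nth)
    ultimately have "v l (Suc k) \<noteq> 0" unfolding top by auto
    then show False using \<open>\<not> l < N\<close> assms(2) unfolding empty_from_column_def by simp
  qed
  then have "(\<Sum>x<N. x * v x (Suc k)) = sum_list lam"
    unfolding top by (intro sum_times_card_nth_eq_sum_list) auto
  then show ?thesis using P_lam_vertical_moment[OF assms(1,2) order_refl] by simp
qed

lemma typicalD:
  assumes "typical k (h, v)" "y \<in> {1..k}"
  shows "(v x y, h x y, v x (Suc y), h (Suc x) y) \<in> {(0,0,0,0), (0,1,0,1), (0,1,1,0), (1,0,0,1)}"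
  using assms unfolding typical_def by simp

lemma typical_sum_straight:
  assumes "typical k (h, v)"
  shows "(\<Sum>y\<in>{1..k}. \<Sum>x<N. h (Suc x) y)
    = (\<Sum>y\<in>{1..k}. \<Sum>x<N. h x y * h (Suc x) y) + (\<Sum>y\<in>{1..k}. \<Sum>x<N. v x y)"
proof -
  have "h (Suc x) y = h x y * h (Suc x) y + v x y" if "y \<in> {1..k}" for x y
    using typicalD[OF assms that, of x] by auto
  then have "(\<Sum>y\<in>{1..k}. \<Sum>x<N. h (Suc x) y)
      = (\<Sum>y\<in>{1..k}. \<Sum>x<N. h x y * h (Suc x) y + v x y)"
    by (intro sum.cong) auto
  then show ?thesis by (simp add: sum.distrib)
qed

lemma vweight_typical:
  assumes "s\<^sup>2 = 1 / q" "s * z \<noteq> 1"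
    and "(i1, j1, i2, j2) \<in> {(0,0,0,0), (0,1,0,1), (0,1,1,0), (1,0,0,1)}"
  shows "vweight q s z i1 j1 i2 j2 =
     ((1 - q) / (1 - s * z)) ^ i2 * ((1 - 1 / q) * z / (1 - s * z)) ^ i1
   * ((z - s) / (1 - s * z)) ^ (j1 * j2)"
  using assms(3) by (elim insertE emptyE) (use assms(1,2) in \<open>simp_all add: vweight_def\<close>)

lemma Wt_eq_prod_columns:
  assumes "s * z \<noteq> 1" "empty_from_column N k h v"
  shows "Wt q s z k (h, v) =
    (\<Prod>y\<in>{1..k}. \<Prod>x<N. vweight q s z (v x y) (h x y) (v x (Suc y)) (h (Suc x) y))"
proof -
  let ?w = "\<lambda>(x, y). vweight q s z (v x y) (h x y) (v x (Suc y)) (h (Suc x) y)"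
  have "x < N" if "(x, y) \<in> vertices_nonempty k (h, v)" for x y
  proof (rule ccontr)
    assume "\<not> x < N"
    then have "h x y = 0 \<and> v x y = 0 \<and> v x (Suc y) = 0 \<and> h (Suc x) y = 0"
      using that assms(2) unfolding vertices_nonempty_def empty_from_column_def by auto
    then show False using that unfolding vertices_nonempty_def by simp
  qed
  then have "vertices_nonempty k (h, v) \<subseteq> {..<N} \<times> {1..k}"
    unfolding vertices_nonempty_def by auto
  moreover have "?w (x, y) = 1"
    if "(x, y) \<in> {..<N} \<times> {1..k} - vertices_nonempty k (h, v)" for x y
  proof -
    have "h x y = 0 \<and> v x y = 0 \<and> v x (Suc y) = 0 \<and> h (Suc x) y = 0"
      using that unfolding vertices_nonempty_def by auto
    then show ?thesis using assms(1) by (simp add: vweight_def)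
  qed
  ultimately have "Wt q s z k (h, v) = (\<Prod>p\<in>{..<N} \<times> {1..k}. ?w p)"
    unfolding Wt_def prod.case by (intro prod.mono_neutral_left) fastforce+
  also have "\<dots> = (\<Prod>x<N. \<Prod>y\<in>{1..k}. ?w (x, y))"
    by (simp add: prod.cartesian_product)
  also have "\<dots> = (\<Prod>y\<in>{1..k}. \<Prod>x<N. ?w (x, y))"
    by (rule prod.swap)
  finally show ?thesis by simp
qed

lemma Wt_typical:
  assumes "s\<^sup>2 = 1 / q" "s * u \<noteq> 1" "typical k (h, v)" "empty_from_column N k h v"
  shows "Wt q s u k (h, v) =
     ((1 - q) / (1 - s * u)) ^ (\<Sum>y\<in>{1..k}. \<Sum>x<N. v x (Suc y))
   * ((1 - 1 / q) * u / (1 - s * u)) ^ (\<Sum>y\<in>{1..k}. \<Sum>x<N. v x y)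
   * ((u - s) / (1 - s * u)) ^ (\<Sum>y\<in>{1..k}. \<Sum>x<N. h x y * h (Suc x) y)"
proof -
  have "Wt q s u k (h, v) = (\<Prod>y\<in>{1..k}. \<Prod>x<N.
      ((1 - q) / (1 - s * u)) ^ v x (Suc y) * ((1 - 1 / q) * u / (1 - s * u)) ^ v x y
    * ((u - s) / (1 - s * u)) ^ (h x y * h (Suc x) y))"
    unfolding Wt_eq_prod_columns[OF assms(2,4)]
    using vweight_typical[OF assms(1,2) typicalD[OF assms(3)]] by (intro prod.cong) auto
  then show ?thesis by (simp add: power_sum prod.distrib)
qed

lemma powr_neg_half_squared: "0 < q \<Longrightarrow> (q powr (-1/2))\<^sup>2 = 1 / (q::real)"
  by (simp add: power2_eq_square flip: powr_add)

lemma one_less_powr_neg_half: "0 < q \<Longrightarrow> q < 1 \<Longrightarrow> 1 < (q::real) powr (-1/2)"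
  using powr_less_mono2_neg[of "-1/2" q 1] by simp

theorem lemma3p7:
  fixes k :: nat and q s u :: real and lam :: "nat list" and P :: pathcoll
  assumes "0 < q" "q < 1" "s = q powr (-1/2)" "u > s"
    and "lam \<in> Sign_plus k" "sorted_wrt (>) lam"
    and "P \<in> P_lam k lam" "typical k P"
  shows "Wt q s u k P =
     ((1 - q) / (1 - s * u)) ^ (Suc k choose 2)
   * ((1 - 1 / q) * u / (1 - s * u)) ^ (k choose 2)
   * ((u - s) / (1 - s * u)) powi (int (sum_list lam) - int (k choose 2))"
proof -
  obtain h v where P: "P = (h, v)" by (cases P)
  have in_P_lam: "(h, v) \<in> P_lam k lam" and typical_P: "typical k (h, v)"
    using assms(7,8) P by simp_all
  have len: "length lam = k" using assms(5) by (simp add: Sign_plus_def)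
  obtain N where N: "empty_from_column N k h v" using P_lam_empty_from_column[OF in_P_lam len] .
  have s2: "s\<^sup>2 = 1 / q" using assms(1,3) powr_neg_half_squared by simp
  have "1 < s" using assms(1,2,3) one_less_powr_neg_half by simp
  then have su: "s * u \<noteq> 1" using assms(4) less_1_mult[of s u] by simp
  have "(\<Sum>y\<in>{1..k}. \<Sum>x<N. h x y * h (Suc x) y) + (k choose 2) = sum_list lam"
    using typical_sum_straight[OF typical_P, of N]
      P_lam_sum_horizontal_steps[OF in_P_lam N len] P_lam_sum_vertical(2)[OF in_P_lam N]
    by simp
  then have straight: "int (sum_list lam) - int (k choose 2)
      = int (\<Sum>y\<in>{1..k}. \<Sum>x<N. h x y * h (Suc x) y)"
    by linarith
  show ?thesis
    unfolding P Wt_typical[OF s2 su typical_P N] P_lam_sum_vertical[OF in_P_lam N] straight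
      power_int_of_nat ..
qed

end
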